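(* Let $\mathcal A_{ML}$ be the MLMC estimator based on $\{X_\ell\}$ satisfying Assumption A, and suppose Assumption B holds. Then $$\lim_{\epsilon\downarrow0}\frac{\mathrm{Var}(\mathcal A_{ML}(\epsilon))}{\epsilon^2}=1.$$
   Context: Let $(\Omega,\mathcal F,\mathbb P)$ be a probability space, $X\in L^2(\Omega)$ a real random variable and $\{X_\ell\}_{\ell=-1}^\infty\subset L^2(\Omega)$ with $X_{-1}:=0$. Put $\Delta_\ell X:=X_\ell-X_{\ell-1}$, $V_\ell:=\mathrm{Var}(\Delta_\ell X)$, and let $C_\ell>0$ denote the (given) cost of sampling $\Delta_\ell X$. Assumption A: there are positive constants $\alpha,\beta,\gamma$ with $\min(\beta,\gamma)\le 2\alpha$, and $c_\alpha>0$, such that for all $\ell\in\mathbb N_0$: $|\mathbb E[X-X_\ell]|\le c_\alpha e^{-\alpha\ell}$; $V_\ell\le C e^{-\beta\ell}$ for some constant $C>0$; and $c e^{\gamma\ell}<C_\ell<C' e^{\gamma\ell}$ for constants $0<c<C'$. Define $S_k:=\sum_{\ell=0}^k\sqrt{V_\ell C_\ell}$. MLMC estimator: for $\epsilon>0$, $L(\epsilon):=\max(\lceil \log(c_\alpha\epsilon^{-1})/\alpha\rceil,1)$, $M_\ell(\epsilon):=\max\big(\lceil \epsilon^{-2}\sqrt{V_\ell/C_\ell}\,S_{L(\epsilon)}\rceil,1\big)$, and $\mathcal A_{ML}(\epsilon):=\sum_{\ell=0}^{L(\epsilon)}\frac{1}{M_\ell(\epsilon)}\sum_{i=1}^{M_\ell(\epsilon)}\Delta_\ell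 X^i$, where the family $\{\Delta_\ell X^i\}$ is mutually independent and each $\Delta_\ell X^i$ has the law of $\Delta_\ell X$. Conventions: $0\cdot(\pm\infty)=0$, $0/0=0$. Assumption B: $V_0>0$; if $\beta=\gamma$ then $\lim_{k\to\infty}S_k=\infty$; if $\gamma>\beta$ then $\beta<2\alpha$ and there exists $\upsilon\in[\beta,2\alpha)$ with $\liminf_{k\to\infty}S_k e^{(\upsilon-\gamma)k/2}>1$. *)

theory Defs
  imports "HOL-Probability.Probability"
begin

definition dX :: "(nat \<Rightarrow> 'a \<Rightarrow> real) \<Rightarrow> nat \<Rightarrow> 'a \<Rightarrow> real" where
  "dX Xl l = (\<lambda>\<omega>. Xl l \<omega> - (if l = 0 then 0 else Xl (l - 1) \<omega>))"

definition Vlev :: "'a measure \<Rightarrow> (nat \<Rightarrow> 'a \<Rightarrow> real) \<Rightarrow> nat \<Rightarrow> real" where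
  "Vlev P Xl l = prob_space.variance P (dX Xl l)"

definition Ssum :: "(nat \<Rightarrow> real) \<Rightarrow> (nat \<Rightarrow> real) \<Rightarrow> nat \<Rightarrow> real" where
  "Ssum V Cl k = (\<Sum>l\<le>k. sqrt (V l * Cl l))"

definition Leps :: "real \<Rightarrow> real \<Rightarrow> real \<Rightarrow> nat" where
  "Leps calpha alpha eps = nat (max \<lceil>ln (calpha / eps) / alpha\<rceil> 1)"

definition Meps :: "(nat \<Rightarrow> real) \<Rightarrow> (nat \<Rightarrow> real) \<Rightarrow> real \<Rightarrow> real \<Rightarrow> real \<Rightarrow> nat \<Rightarrow> nat" where
  "Meps V Cl calpha alpha eps l =
     nat (max \<lceil>(1 / eps\<^sup>2) * sqrt (V l / Cl l) * Ssum V Cl (Leps calpha alpha eps)\<rceil> 1)"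

definition AML :: "(nat \<Rightarrow> real) \<Rightarrow> (nat \<Rightarrow> real) \<Rightarrow> real \<Rightarrow> real \<Rightarrow>
    (nat \<Rightarrow> nat \<Rightarrow> 'b \<Rightarrow> real) \<Rightarrow> real \<Rightarrow> 'b \<Rightarrow> real" where
  "AML V Cl calpha alpha Y eps =
     (\<lambda>\<omega>. \<Sum>l\<le>Leps calpha alpha eps.
        (1 / real (Meps V Cl calpha alpha eps l)) *
        (\<Sum>i\<in>{1..Meps V Cl calpha alpha eps l}. Y l i \<omega>))"

end

theory Submission
  imports Defs "HOL-Real_Asymp.Real_Asymp"
begin

text \<open>
  By independence, Var(A_ML(eps)) = \<Sum>_{l \<le> L} V_l / M_l. Without the ceiling in M_l every term
  would equal eps^2 sqrt(V_l C_l) / S_L, and these sum to exactly eps^2; rounding M_l up loses at most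
  eps^4 C_l / S_L^2 on level l. Since eps = O(e^{-alpha L}), the relative deficit 1 - Var / eps^2 is
  at most a constant times e^{(gamma - 2 alpha) L} / S_L^2, which tends to 0 (by Assumption B when
  gamma \<ge> 2 alpha), except when gamma = 2 alpha < beta. In that case only the levels below L/2 are
  charged with the rounding loss; the levels above L/2 are charged with their whole contribution,
  which is small because sqrt(V_l C_l) decays geometrically.
\<close>

lemma (in prob_space) indep_vars_expectation_mult:
  fixes X :: "'i \<Rightarrow> 'a \<Rightarrow> real"
  assumes indep: "indep_vars (\<lambda>_. borel) X {i, j}" and "i \<noteq> j"
    and "integrable M (X i)" "integrable M (X j)"
  shows "integrable M (\<lambda>x. X i x * X j x)"
    and "expectation (\<lambda>x. X i x * X j x) = expectation (X i) * expectation (X j)"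
proof -
  have prod: "(\<lambda>x. \<Prod>k\<in>{i, j}. X k x) = (\<lambda>x. X i x * X j x)"
    using \<open>i \<noteq> j\<close> by auto
  show "integrable M (\<lambda>x. X i x * X j x)"
    using indep_vars_integrable[OF _ indep] assms(3,4) unfolding prod by auto
  show "expectation (\<lambda>x. X i x * X j x) = expectation (X i) * expectation (X j)"
    using indep_vars_lebesgue_integral[OF _ indep] assms(2-4) unfolding prod by auto
qed

lemma square_integrable_diff:
  fixes f g :: "'a \<Rightarrow> real"
  assumes "f \<in> borel_measurable M" "g \<in> borel_measurable M"
    and "integrable M (\<lambda>x. (f x)\<^sup>2)" "integrable M (\<lambda>x. (g x)\<^sup>2)"
  shows "integrable M (\<lambda>x. (f x - g x)\<^sup>2)"
proof (rule Bochner_Integration.integrable_bound)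
  show "integrable M (\<lambda>x. 2 * (f x)\<^sup>2 + 2 * (g x)\<^sup>2)"
    using assms(3,4) by auto
  have "(a - b)\<^sup>2 \<le> 2 * a\<^sup>2 + 2 * b\<^sup>2" for a b :: real
    using zero_le_power2[of "a + b"] unfolding power2_diff power2_sum by linarith
  then show "AE x in M. norm ((f x - g x)\<^sup>2) \<le> norm (2 * (f x)\<^sup>2 + 2 * (g x)\<^sup>2)"
    by simp
qed (use assms(1,2) in auto)

lemma (in prob_space) variance_sum_indep_vars:
  fixes Z :: "'i \<Rightarrow> 'a \<Rightarrow> real"
  assumes fin: "finite I" and indep: "indep_vars (\<lambda>_. borel) Z I"
    and sq: "\<And>i. i \<in> I \<Longrightarrow> integrable M (\<lambda>x. (Z i x)\<^sup>2)"
  shows "variance (\<lambda>x. \<Sum>i\<in>I. Z i x) = (\<Sum>i\<in>I. variance (Z i))"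
proof -
  have meas: "Z i \<in> borel_measurable M" if "i \<in> I" for i
    using indep that unfolding indep_vars_def by auto
  have intZ: "integrable M (Z i)" if "i \<in> I" for i
    using that by (intro square_integrable_imp_integrable[OF meas sq])
  define W where "W i x = Z i x - expectation (Z i)" for i x
  have indepW: "indep_vars (\<lambda>_. borel) W I"
    unfolding W_def by (rule indep_vars_compose2[OF indep]) auto
  have intW: "integrable M (W i)" and EW: "expectation (W i) = 0" if "i \<in> I" for i
    unfolding W_def using intZ[OF that] by (auto simp: prob_space)
  have sqW: "integrable M (\<lambda>x. W i x * W i x)" if "i \<in> I" for i
    using square_integrable_diff[OF meas[OF that] _ sq[OF that], of "\<lambda>_. expectation (Z i)"] that
    unfolding W_def power2_eq_square by auto
  have cross: "integrable M (\<lambda>x. W i x * W j x) \<and> expectation (\<lambda>x. W i x * W j x) = 0"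
    if "i \<in> I" "j \<in> I" "i \<noteq> j" for i j
    using indep_vars_expectation_mult[OF indep_vars_subset[OF indepW] \<open>i \<noteq> j\<close>] intW EW that
    by auto
  have intWW: "integrable M (\<lambda>x. W i x * W j x)" if "i \<in> I" "j \<in> I" for i j
    using cross sqW that by (cases "i = j") auto
  have "expectation (\<lambda>x. \<Sum>i\<in>I. Z i x) = (\<Sum>i\<in>I. expectation (Z i))"
    by (rule Bochner_Integration.integral_sum) (use intZ in auto)
  then have centred: "(\<lambda>x. ((\<Sum>i\<in>I. Z i x) - expectation (\<lambda>x. \<Sum>i\<in>I. Z i x))\<^sup>2)
      = (\<lambda>x. \<Sum>i\<in>I. \<Sum>j\<in>I. W i x * W j x)"
    unfolding W_def power2_eq_square by (auto simp: sum_subtractf[symmetric] sum_product)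
  have "variance (\<lambda>x. \<Sum>i\<in>I. Z i x) = (\<Sum>i\<in>I. \<Sum>j\<in>I. expectation (\<lambda>x. W i x * W j x))"
    unfolding centred using intWW
    by (subst Bochner_Integration.integral_sum) (auto intro!: Bochner_Integration.integrable_sum)
  also have "\<dots> = (\<Sum>i\<in>I. expectation (\<lambda>x. W i x * W i x))"
  proof (rule sum.cong[OF refl])
    fix i assume "i \<in> I"
    then have "(\<Sum>j\<in>I. expectation (\<lambda>x. W i x * W j x)) = (\<Sum>j\<in>{i}. expectation (\<lambda>x. W i x * W j x))"
      by (intro sum.mono_neutral_right) (use fin cross in auto)
    then show "(\<Sum>j\<in>I. expectation (\<lambda>x. W i x * W j x)) = expectation (\<lambda>x. W i x * W i x)"
      by simp
  qed
  also have "\<dots> = (\<Sum>i\<in>I. variance (Z i))"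
    by (simp add: W_def power2_eq_square)
  finally show ?thesis .
qed

lemma (in prob_space) variance_divide:
  fixes Z :: "'a \<Rightarrow> real"
  shows "variance (\<lambda>x. Z x / c) = variance Z / c\<^sup>2"
proof -
  have "(\<lambda>x. (Z x / c - expectation Z / c)\<^sup>2) = (\<lambda>x. (Z x - expectation Z)\<^sup>2 / c\<^sup>2)"
    by (auto simp: power_divide diff_divide_distrib[symmetric])
  then show ?thesis by simp
qed

lemma
  fixes Y :: "'a \<Rightarrow> real" and Z :: "'b \<Rightarrow> real"
  assumes Y: "Y \<in> borel_measurable M" and Z: "Z \<in> borel_measurable N"
    and law: "distr M borel Y = distr N borel Z"
  shows integrable_square_if_same_distr:
      "integrable M (\<lambda>x. (Y x)\<^sup>2) \<longleftrightarrow> integrable N (\<lambda>x. (Z x)\<^sup>2)"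
    and variance_if_same_distr: "prob_space.variance M Y = prob_space.variance N Z"
proof -
  have transfer: "(\<integral>x. f (Y x) \<partial>M) = (\<integral>x. f (Z x) \<partial>N)"
    if "f \<in> borel_measurable borel" for f :: "real \<Rightarrow> real"
    using integral_distr[OF Y that] integral_distr[OF Z that] law by simp
  show "integrable M (\<lambda>x. (Y x)\<^sup>2) \<longleftrightarrow> integrable N (\<lambda>x. (Z x)\<^sup>2)"
    using integrable_distr_eq[OF Y, of "\<lambda>y. y\<^sup>2"] integrable_distr_eq[OF Z, of "\<lambda>y. y\<^sup>2"] law
    by simp
  show "prob_space.variance M Y = prob_space.variance N Z"
    using transfer[of "\<lambda>y. y"] transfer[of "\<lambda>y. (y - (\<integral>x. Z x \<partial>N))\<^sup>2"] by simp
qed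

lemma (in prob_space) variance_AML:
  fixes Y :: "nat \<Rightarrow> nat \<Rightarrow> 'a \<Rightarrow> real"
  assumes indep: "indep_vars (\<lambda>_. borel) (\<lambda>(l, i). Y l i) UNIV"
    and sq: "\<And>l i. integrable M (\<lambda>x. (Y l i x)\<^sup>2)"
    and var: "\<And>l i. variance (Y l i) = v l"
  shows "variance (AML V Cl calpha alpha Y eps)
    = (\<Sum>l\<le>Leps calpha alpha eps. v l / Meps V Cl calpha alpha eps l)"
proof -
  define L where "L = Leps calpha alpha eps"
  define m where "m = Meps V Cl calpha alpha eps"
  define I where "I = Sigma {..L} (\<lambda>l. {1..m l})"
  define Z where "Z p x = Y (fst p) (snd p) x / real (m (fst p))" for p x
  have "indep_vars (\<lambda>_. borel) (\<lambda>p x. (\<lambda>y. y / real (m (fst p))) ((\<lambda>(l, i). Y l i) p x)) UNIV"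
    by (rule indep_vars_compose2[OF indep]) auto
  then have indepZ: "indep_vars (\<lambda>_. borel) Z I"
    by (rule indep_vars_subset[THEN indep_vars_cong[THEN iffD1, rotated 3]])
      (auto simp: Z_def split_beta)
  have sqZ: "integrable M (\<lambda>x. (Z p x)\<^sup>2)" for p
    unfolding Z_def power_divide using sq by auto
  have "AML V Cl calpha alpha Y eps = (\<lambda>x. \<Sum>l\<le>L. \<Sum>i\<in>{1..m l}. Z (l, i) x)"
    unfolding AML_def Z_def L_def m_def by (simp add: sum_distrib_left)
  also have "\<dots> = (\<lambda>x. \<Sum>p\<in>I. Z p x)"
    unfolding I_def by (subst sum.Sigma) (auto simp: split_beta)
  finally have "variance (AML V Cl calpha alpha Y eps) = (\<Sum>p\<in>I. variance (Z p))"
    using variance_sum_indep_vars[OF _ indepZ sqZ] unfolding I_def by simp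
  also have "\<dots> = (\<Sum>p\<in>I. v (fst p) / (real (m (fst p)))\<^sup>2)"
    by (intro sum.cong refl) (unfold Z_def, subst variance_divide, simp add: var)
  also have "\<dots> = (\<Sum>l\<le>L. \<Sum>i\<in>{1..m l}. v l / (real (m l))\<^sup>2)"
    unfolding I_def by (subst sum.Sigma) (auto simp: split_beta)
  also have "\<dots> = (\<Sum>l\<le>L. v l / m l)"
    by (intro sum.cong refl) (auto simp: m_def Meps_def power2_eq_square)
  finally show ?thesis unfolding L_def m_def .
qed

lemma divide_ceiling_bounds:
  fixes a v :: real
  assumes a: "a > 0" and v: "v \<ge> 0"
  shows "v / real (nat (max \<lceil>a\<rceil> 1)) \<le> v / a"
    and "v / a - v / real (nat (max \<lceil>a\<rceil> 1)) \<le> v / a\<^sup>2"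
proof -
  have "max \<lceil>a\<rceil> 1 = \<lceil>a\<rceil>"
    using a one_le_ceiling[of a] by (intro max_absorb1) blast
  then have n: "real (nat (max \<lceil>a\<rceil> 1)) = of_int \<lceil>a\<rceil>"
    using a by simp
  have lower: "a \<le> real (nat (max \<lceil>a\<rceil> 1))" and upper: "real (nat (max \<lceil>a\<rceil> 1)) \<le> a + 1"
    unfolding n by linarith+
  show "v / real (nat (max \<lceil>a\<rceil> 1)) \<le> v / a"
    using a v lower by (intro divide_left_mono) auto
  have "v / a - v / real (nat (max \<lceil>a\<rceil> 1)) \<le> v / a - v / (a + 1)"
    using a v upper by (intro diff_left_mono divide_left_mono) auto
  also have "\<dots> = v / (a * (a + 1))"
    using a by (simp add: field_simps)
  also have "\<dots> \<le> v / a\<^sup>2"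
    using a v by (intro divide_left_mono) (auto simp: power2_eq_square)
  finally show "v / a - v / real (nat (max \<lceil>a\<rceil> 1)) \<le> v / a\<^sup>2" .
qed

lemma sum_exp_le_geometric:
  fixes g :: real
  assumes g: "g > 0"
  shows "(\<Sum>l\<le>m. exp (g * real l)) \<le> exp g / (exp g - 1) * exp (g * real m)"
proof (induction m)
  case 0
  have "exp g - 1 > 0" using g by simp
  then show ?case by (simp add: field_simps)
next
  case (Suc m)
  have "exp g - 1 > 0" using g by simp
  moreover have "exp (g * real (Suc m)) = exp g * exp (g * real m)"
    by (simp add: mult_exp_exp algebra_simps)
  ultimately show ?case
    using Suc by (simp add: field_simps)
qed

lemma
  assumes calpha: "calpha > 0" and alpha: "alpha > 0" and eps: "0 < eps" "eps < calpha"
  shows Leps_ge: "ln (calpha / eps) / alpha \<le> real (Leps calpha alpha eps)"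
    and square_le_exp_Leps:
      "eps\<^sup>2 \<le> (calpha * exp alpha)\<^sup>2 * exp (- 2 * alpha * real (Leps calpha alpha eps))"
proof -
  define t where "t = ln (calpha / eps) / alpha"
  define L where "L = Leps calpha alpha eps"
  have "t > 0" unfolding t_def using calpha alpha eps by (simp add: divide_simps)
  then have "max \<lceil>t\<rceil> 1 = \<lceil>t\<rceil>"
    using one_le_ceiling[of t] by (intro max_absorb1) blast
  then have L_eq: "real L = of_int \<lceil>t\<rceil>"
    unfolding L_def Leps_def t_def[symmetric] using \<open>t > 0\<close> by simp
  show "ln (calpha / eps) / alpha \<le> real (Leps calpha alpha eps)"
    using L_eq unfolding t_def[symmetric] L_def by linarith
  have "real L < t + 1"
    using L_eq by linarith
  then have "alpha * real L < ln (calpha / eps) + alpha"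
    using alpha unfolding t_def by (simp add: field_simps)
  then have "exp (alpha * real L) < calpha / eps * exp alpha"
    using calpha eps by (metis exp_add exp_less_cancel_iff exp_ln divide_pos_pos)
  then have "eps \<le> calpha * exp alpha * exp (- alpha * real L)"
    using eps by (simp add: exp_minus field_simps)
  then have "eps\<^sup>2 \<le> (calpha * exp alpha * exp (- alpha * real L))\<^sup>2"
    using eps by (intro power_mono) auto
  also have "\<dots> = (calpha * exp alpha)\<^sup>2 * exp (- 2 * alpha * real L)"
    by (simp add: power_mult_distrib power2_eq_square mult_exp_exp)
  finally show "eps\<^sup>2 \<le> (calpha * exp alpha)\<^sup>2 * exp (- 2 * alpha * real (Leps calpha alpha eps))"
    unfolding L_def .
qed

lemma Leps_tendsto_sequentially:
  assumes calpha: "calpha > 0" and alpha: "alpha > 0"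
  shows "filterlim (Leps calpha alpha) sequentially (at_right 0)"
proof -
  have log_lim: "filterlim (\<lambda>eps. ln (calpha / eps) / alpha) at_top (at_right 0)"
    using calpha alpha by real_asymp
  have small: "eventually (\<lambda>eps. 0 < eps \<and> eps < calpha) (at_right (0::real))"
    using calpha by (simp add: eventually_at_right_field) metis
  have "filterlim (\<lambda>eps. real (Leps calpha alpha eps)) at_top (at_right 0)"
    by (rule filterlim_at_top_mono[OF log_lim])
      (use small Leps_ge[OF calpha alpha] in \<open>auto elim: eventually_mono\<close>)
  then show ?thesis
    by (simp add: filterlim_sequentially_iff_filterlim_real)
qed

locale mlmc_rates =
  fixes V Cl :: "nat \<Rightarrow> real" and alpha beta gamma calpha C c C' :: real
  assumes alpha_pos: "alpha > 0" and gamma_pos: "gamma > 0" and calpha_pos: "calpha > 0"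
    and rates: "min beta gamma \<le> 2 * alpha"
    and V_nonneg: "\<And>l. V l \<ge> 0" and V0_pos: "V 0 > 0"
    and V_le: "\<And>l. V l \<le> C * exp (- beta * real l)"
    and c_pos: "c > 0"
    and Cl_gt: "\<And>l. c * exp (gamma * real l) < Cl l"
    and Cl_lt: "\<And>l. Cl l < C' * exp (gamma * real l)"
    and S_unbounded: "beta = gamma \<Longrightarrow> filterlim (Ssum V Cl) at_top sequentially"
    and S_growth: "beta < gamma \<Longrightarrow> \<exists>u. beta \<le> u \<and> u < 2 * alpha \<and>
       liminf (\<lambda>k. ereal (Ssum V Cl k * exp ((u - gamma) * real k / 2))) > 1"
begin

abbreviation S :: "nat \<Rightarrow> real" where "S \<equiv> Ssum V Cl"
abbreviation L :: "real \<Rightarrow> nat" where "L \<equiv> Leps calpha alpha"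
abbreviation M :: "real \<Rightarrow> nat \<Rightarrow> nat" where "M \<equiv> Meps V Cl calpha alpha"

definition deficit :: "real \<Rightarrow> real" where
  "deficit eps = 1 - (\<Sum>l\<le>L eps. V l / M eps l) / eps\<^sup>2"

definition deficit_const :: real where
  "deficit_const = (calpha * exp alpha)\<^sup>2 * (C' * exp gamma / (exp gamma - 1))"

lemma Cl_pos: "Cl l > 0"
  using c_pos Cl_gt[of l] by (meson exp_gt_zero mult_pos_pos order.strict_trans)

lemma C'_pos: "C' > 0"
  using Cl_pos[of 0] Cl_lt[of 0] by simp

lemma C_pos: "C > 0"
  using V0_pos V_le[of 0] by simp

lemma deficit_const_nonneg: "deficit_const \<ge> 0"
  unfolding deficit_const_def using C'_pos gamma_pos by (simp add: divide_nonneg_pos)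

lemma S_ge_S0: "S 0 \<le> S k"
  unfolding Ssum_def by (intro sum_mono2) (auto simp: V_nonneg Cl_pos less_imp_le)

lemma S_pos: "S k > 0"
proof -
  have "S 0 > 0"
    using V0_pos Cl_pos[of 0] by (simp add: Ssum_def)
  then show ?thesis
    using S_ge_S0[of k] by linarith
qed

lemma level_gap_bounds:
  assumes eps: "eps > 0"
  shows "V l / M eps l \<le> eps\<^sup>2 * sqrt (V l * Cl l) / S (L eps)"
    and "eps\<^sup>2 * sqrt (V l * Cl l) / S (L eps) - V l / M eps l
           \<le> eps\<^sup>2 * (eps\<^sup>2 * Cl l / (S (L eps))\<^sup>2)"
proof -
  define a where "a = (1 / eps\<^sup>2) * sqrt (V l / Cl l) * S (L eps)"
  have M_eq: "M eps l = nat (max \<lceil>a\<rceil> 1)"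
    unfolding Meps_def a_def ..
  have "V l / M eps l \<le> eps\<^sup>2 * sqrt (V l * Cl l) / S (L eps)
      \<and> eps\<^sup>2 * sqrt (V l * Cl l) / S (L eps) - V l / M eps l
          \<le> eps\<^sup>2 * (eps\<^sup>2 * Cl l / (S (L eps))\<^sup>2)"
  proof (cases "V l = 0")
    case True
    then show ?thesis using Cl_pos[of l] by simp
  next
    case False
    then have V: "V l > 0"
      using V_nonneg[of l] by simp
    then have "a > 0"
      unfolding a_def using Cl_pos[of l] S_pos eps by simp
    moreover have "V l / a = eps\<^sup>2 * sqrt (V l * Cl l) / S (L eps)"
      and "V l / a\<^sup>2 = eps\<^sup>2 * (eps\<^sup>2 * Cl l / (S (L eps))\<^sup>2)"
      unfolding a_def using V Cl_pos[of l] S_pos[of "L eps"] eps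
      by (simp_all add: field_simps power2_eq_square real_sqrt_mult real_sqrt_divide)
    ultimately show ?thesis
      unfolding M_eq using divide_ceiling_bounds V_nonneg by metis
  qed
  then show "V l / M eps l \<le> eps\<^sup>2 * sqrt (V l * Cl l) / S (L eps)"
    and "eps\<^sup>2 * sqrt (V l * Cl l) / S (L eps) - V l / M eps l
           \<le> eps\<^sup>2 * (eps\<^sup>2 * Cl l / (S (L eps))\<^sup>2)"
    by simp_all
qed

lemma deficit_eq_sum_gaps:
  assumes "eps > 0"
  shows "deficit eps
    = (\<Sum>l\<le>L eps. eps\<^sup>2 * sqrt (V l * Cl l) / S (L eps) - V l / M eps l) / eps\<^sup>2"
proof -
  have "(\<Sum>l\<le>L eps. eps\<^sup>2 * sqrt (V l * Cl l) / S (L eps))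
      = eps\<^sup>2 * (\<Sum>l\<le>L eps. sqrt (V l * Cl l)) / S (L eps)"
    by (simp add: sum_distrib_left sum_divide_distrib)
  also have "\<dots> = eps\<^sup>2"
    using S_pos[of "L eps"] by (simp add: Ssum_def)
  finally show ?thesis
    unfolding deficit_def sum_subtractf using assms by (simp add: field_simps)
qed

lemma deficit_nonneg:
  assumes "eps > 0"
  shows "deficit eps \<ge> 0"
  unfolding deficit_eq_sum_gaps[OF assms] using level_gap_bounds(1)[OF assms]
  by (intro divide_nonneg_nonneg sum_nonneg) auto

lemma deficit_le_split:
  assumes eps: "eps > 0" and m: "m \<le> L eps"
  shows "deficit eps \<le> eps\<^sup>2 * (\<Sum>l\<le>m. Cl l) / (S (L eps))\<^sup>2
    + (\<Sum>l\<in>{m<..L eps}. sqrt (V l * Cl l)) / S (L eps)"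
proof -
  define gap where "gap l = eps\<^sup>2 * sqrt (V l * Cl l) / S (L eps) - V l / M eps l" for l
  have split: "{..L eps} = {..m} \<union> {m<..L eps}"
    using m by auto
  have "(\<Sum>l\<le>L eps. gap l) = (\<Sum>l\<le>m. gap l) + (\<Sum>l\<in>{m<..L eps}. gap l)"
    unfolding split by (rule sum.union_disjoint) auto
  also have "\<dots> \<le> (\<Sum>l\<le>m. eps\<^sup>2 * (eps\<^sup>2 * Cl l / (S (L eps))\<^sup>2))
      + (\<Sum>l\<in>{m<..L eps}. eps\<^sup>2 * sqrt (V l * Cl l) / S (L eps))"
    unfolding gap_def using level_gap_bounds[OF eps] V_nonneg
    by (intro add_mono sum_mono) auto
  also have "\<dots> = eps\<^sup>2 * (eps\<^sup>2 * (\<Sum>l\<le>m. Cl l) / (S (L eps))\<^sup>2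
      + (\<Sum>l\<in>{m<..L eps}. sqrt (V l * Cl l)) / S (L eps))"
    by (simp add: sum_distrib_left sum_divide_distrib distrib_left)
  finally show ?thesis
    unfolding deficit_eq_sum_gaps[OF eps] gap_def[symmetric] using eps
    by (simp add: divide_simps mult.commute)
qed

lemma rounding_loss_le:
  assumes eps: "0 < eps" "eps < calpha"
  shows "eps\<^sup>2 * (\<Sum>l\<le>m. Cl l) / (S (L eps))\<^sup>2
    \<le> deficit_const * exp (gamma * real m - 2 * alpha * real (L eps)) / (S (L eps))\<^sup>2"
proof -
  have "(\<Sum>l\<le>m. Cl l) \<le> C' * (\<Sum>l\<le>m. exp (gamma * real l))"
    unfolding sum_distrib_left by (intro sum_mono less_imp_le Cl_lt)
  also have "\<dots> \<le> C' * (exp gamma / (exp gamma - 1) * exp (gamma * real m))"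
    using sum_exp_le_geometric[OF gamma_pos] C'_pos by (intro mult_left_mono) auto
  finally have "eps\<^sup>2 * (\<Sum>l\<le>m. Cl l)
      \<le> (calpha * exp alpha)\<^sup>2 * exp (- 2 * alpha * real (L eps))
        * (C' * (exp gamma / (exp gamma - 1) * exp (gamma * real m)))"
    using square_le_exp_Leps[OF calpha_pos alpha_pos eps] Cl_pos
    by (intro mult_mono) (auto intro: sum_nonneg less_imp_le)
  also have "\<dots> = deficit_const * exp (gamma * real m - 2 * alpha * real (L eps))"
    unfolding deficit_const_def by (simp add: mult_exp_exp algebra_simps)
  finally show ?thesis
    by (simp add: divide_right_mono)
qed

lemma rate_ratio_tendsto_0:
  assumes "\<not> (2 * alpha \<le> gamma \<and> gamma < beta)"
  shows "(\<lambda>k. exp ((gamma - 2 * alpha) * real k) / (S k)\<^sup>2) \<longlonglongrightarrow> 0"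
proof -
  have nonneg: "eventually (\<lambda>k. 0 \<le> exp ((gamma - 2 * alpha) * real k) / (S k)\<^sup>2) sequentially"
    by simp
  have S_sq_mono: "(S 0)\<^sup>2 \<le> (S k)\<^sup>2" for k
    using S_ge_S0[of k] S_pos[of 0] by (intro power_mono) auto
  consider "gamma < 2 * alpha" | "beta = gamma" | "beta < gamma"
    using assms by linarith
  then show ?thesis
  proof cases
    case 1
    have "(\<lambda>k::nat. exp ((gamma - 2 * alpha) * real k)) \<longlonglongrightarrow> 0"
      using 1 by real_asymp
    then have "(\<lambda>k. exp ((gamma - 2 * alpha) * real k) / (S 0)\<^sup>2) \<longlonglongrightarrow> 0"
      by (rule tendsto_divide_zero)
    moreover have "exp ((gamma - 2 * alpha) * real k) / (S k)\<^sup>2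
        \<le> exp ((gamma - 2 * alpha) * real k) / (S 0)\<^sup>2" for k
      using S_sq_mono[of k] S_pos[of 0] S_pos[of k] by (intro divide_left_mono) auto
    ultimately show ?thesis
      by (intro tendsto_sandwich[OF nonneg _ tendsto_const]) auto
  next
    case 2
    then have "(gamma - 2 * alpha) * real k \<le> 0" for k
      using rates by (intro mult_nonpos_nonneg) auto
    then have "exp ((gamma - 2 * alpha) * real k) / (S k)\<^sup>2 \<le> 1 / (S k)\<^sup>2" for k
      by (intro divide_right_mono) auto
    moreover have "filterlim (\<lambda>k. (S k)\<^sup>2) at_infinity sequentially"
      using filterlim_pow_at_top[of 2, OF _ S_unbounded[OF 2]]
      by (simp add: filterlim_at_top_imp_at_infinity)
    then have "(\<lambda>k. 1 / (S k)\<^sup>2) \<longlonglongrightarrow> 0"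
      by (rule tendsto_divide_0[OF tendsto_const])
    ultimately show ?thesis
      by (intro tendsto_sandwich[OF nonneg _ tendsto_const]) auto
  next
    case 3
    then obtain u where u: "u < 2 * alpha"
      and liminf: "liminf (\<lambda>k. ereal (S k * exp ((u - gamma) * real k / 2))) > 1"
      using S_growth by blast
    have "(\<lambda>k::nat. exp ((u - 2 * alpha) * real k)) \<longlonglongrightarrow> 0"
      using u by real_asymp
    moreover have "eventually (\<lambda>k. exp ((gamma - 2 * alpha) * real k) / (S k)\<^sup>2
        \<le> exp ((u - 2 * alpha) * real k)) sequentially"
      using less_LiminfD[OF liminf]
    proof eventually_elim
      case (elim k)
      have "exp ((gamma - u) * real k / 2) * exp ((u - gamma) * real k / 2) = 1"
        by (simp add: mult_exp_exp field_simps)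
      then have "exp ((gamma - u) * real k / 2) < S k"
        using elim mult_strict_left_mono[of 1 "S k * exp ((u - gamma) * real k / 2)"
            "exp ((gamma - u) * real k / 2)"]
        by (simp add: algebra_simps)
      then have "exp ((gamma - u) * real k) < (S k)\<^sup>2"
        using power_strict_mono[of _ "S k" 2] exp_double[of "(gamma - u) * real k / 2"] by simp
      then have "exp ((gamma - 2 * alpha) * real k) / (S k)\<^sup>2
          \<le> exp ((gamma - 2 * alpha) * real k) / exp ((gamma - u) * real k)"
        using S_pos[of k] by (intro divide_left_mono mult_pos_pos) simp_all
      also have "\<dots> = exp ((u - 2 * alpha) * real k)"
        by (simp add: exp_diff[symmetric] algebra_simps)
      finally show ?case .
    qed
    ultimately show ?thesis
      by (intro tendsto_sandwich[OF nonneg _ tendsto_const]) auto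
  qed
qed

lemma sqrt_V_Cl_le: "sqrt (V l * Cl l) \<le> sqrt (C * C') * exp (- ((beta - gamma) / 2) * real l)"
proof -
  have "V l * Cl l \<le> (C * exp (- beta * real l)) * (C' * exp (gamma * real l))"
    using V_le[of l] Cl_lt[of l] V_nonneg[of l] Cl_pos[of l] by (intro mult_mono) auto
  also have "\<dots> = C * C' * exp (- (beta - gamma) * real l)"
    by (simp add: mult_exp_exp algebra_simps)
  also have "\<dots> = (sqrt (C * C') * exp (- ((beta - gamma) / 2) * real l))\<^sup>2"
    using C_pos C'_pos unfolding power_mult_distrib exp_double[symmetric]
    by (simp add: field_simps)
  finally show ?thesis
    using C_pos C'_pos by (simp add: real_le_lsqrt)
qed

lemma tail_sum_le:
  assumes "gamma \<le> beta"
  shows "(\<Sum>l\<in>{k div 2<..k}. sqrt (V l * Cl l))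
    \<le> sqrt (C * C') * ((real k + 1) * exp (- ((beta - gamma) / 4) * real k))"
proof -
  have "(\<Sum>l\<in>{k div 2<..k}. sqrt (V l * Cl l))
      \<le> (\<Sum>l\<in>{k div 2<..k}. sqrt (C * C') * exp (- ((beta - gamma) / 4) * real k))"
  proof (rule sum_mono)
    fix l assume "l \<in> {k div 2<..k}"
    then have "real k \<le> 2 * real l"
      by auto
    then have "(beta - gamma) / 4 * real k \<le> (beta - gamma) / 4 * (2 * real l)"
      using assms by (intro mult_left_mono) auto
    also have "\<dots> = (beta - gamma) / 2 * real l"
      by simp
    finally have "exp (- ((beta - gamma) / 2) * real l) \<le> exp (- ((beta - gamma) / 4) * real k)"
      by (simp only: mult_minus_left exp_le_cancel_iff neg_le_iff_le)
    then show "sqrt (V l * Cl l) \<le> sqrt (C * C') * exp (- ((beta - gamma) / 4) * real k)"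
      using C_pos C'_pos by (intro order_trans[OF sqrt_V_Cl_le] mult_left_mono) simp_all
  qed
  also have "\<dots> = sqrt (C * C') * (real (k - k div 2) * exp (- ((beta - gamma) / 4) * real k))"
    by (simp add: mult_ac)
  also have "\<dots> \<le> sqrt (C * C') * ((real k + 1) * exp (- ((beta - gamma) / 4) * real k))"
    using C_pos C'_pos by (intro mult_left_mono mult_right_mono) auto
  finally show ?thesis .
qed

lemma deficit_le_null_sequence:
  obtains h :: "nat \<Rightarrow> real"
  where "h \<longlonglongrightarrow> 0" and "\<And>eps. 0 < eps \<Longrightarrow> eps < calpha \<Longrightarrow> deficit eps \<le> h (L eps)"
proof (cases "2 * alpha \<le> gamma \<and> gamma < beta")
  case False
  show ?thesis
  proof (rule that)
    show "(\<lambda>k. deficit_const * (exp ((gamma - 2 * alpha) * real k) / (S k)\<^sup>2)) \<longlonglongrightarrow> 0"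
      by (rule tendsto_mult_right_zero[OF rate_ratio_tendsto_0[OF False]])
    fix eps :: real assume eps: "0 < eps" "eps < calpha"
    have "deficit eps \<le> eps\<^sup>2 * (\<Sum>l\<le>L eps. Cl l) / (S (L eps))\<^sup>2"
      using deficit_le_split[OF eps(1) order_refl] by simp
    also have "\<dots> \<le> deficit_const * exp (gamma * real (L eps) - 2 * alpha * real (L eps))
        / (S (L eps))\<^sup>2"
      by (rule rounding_loss_le[OF eps])
    finally show "deficit eps
        \<le> deficit_const * (exp ((gamma - 2 * alpha) * real (L eps)) / (S (L eps))\<^sup>2)"
      by (simp add: left_diff_distrib)
  qed
next
  case True
  then have gamma_eq: "gamma = 2 * alpha"
    using rates by (simp add: min_def split: if_splits)
  define h where "h k = deficit_const * exp (- (gamma / 2) * real k) / (S 0)\<^sup>2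
      + sqrt (C * C') * ((real k + 1) * exp (- ((beta - gamma) / 4) * real k)) / S 0" for k
  show ?thesis
  proof (rule that)
    have "(\<lambda>k::nat. exp (- (gamma / 2) * real k)) \<longlonglongrightarrow> 0"
      using gamma_pos by real_asymp
    moreover have "(\<lambda>k::nat. (real k + 1) * exp (- ((beta - gamma) / 4) * real k)) \<longlonglongrightarrow> 0"
      using True by real_asymp
    ultimately show "h \<longlonglongrightarrow> 0"
      unfolding h_def by (intro tendsto_add_zero tendsto_divide_zero tendsto_mult_right_zero)
    fix eps :: real assume eps: "0 < eps" "eps < calpha"
    define k where "k = L eps"
    have "gamma * real (k div 2) - 2 * alpha * real k \<le> - (gamma / 2) * real k"
      using gamma_eq gamma_pos by (simp add: algebra_simps)
    then have head: "eps\<^sup>2 * (\<Sum>l\<le>k div 2. Cl l) / (S k)\<^sup>2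
        \<le> deficit_const * exp (- (gamma / 2) * real k) / (S 0)\<^sup>2"
      using rounding_loss_le[OF eps, of "k div 2"] deficit_const_nonneg S_ge_S0[of k] S_pos[of 0]
      unfolding k_def[symmetric]
      by (elim order_trans, intro frac_le mult_left_mono power_mono) auto
    have tail: "(\<Sum>l\<in>{k div 2<..k}. sqrt (V l * Cl l)) / S k
        \<le> sqrt (C * C') * ((real k + 1) * exp (- ((beta - gamma) / 4) * real k)) / S 0"
      using tail_sum_le[of k] True S_ge_S0[of k] S_pos[of 0] C_pos C'_pos
      by (intro frac_le) (auto intro: sum_nonneg)
    have "deficit eps \<le> eps\<^sup>2 * (\<Sum>l\<le>k div 2. Cl l) / (S k)\<^sup>2
        + (\<Sum>l\<in>{k div 2<..k}. sqrt (V l * Cl l)) / S k"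
      using deficit_le_split[OF eps(1), of "k div 2"] unfolding k_def by simp
    also have "\<dots> \<le> h k"
      unfolding h_def using head tail by (rule add_mono)
    finally show "deficit eps \<le> h (L eps)"
      unfolding k_def .
  qed
qed

lemma deficit_tendsto_0: "(deficit \<longlongrightarrow> 0) (at_right 0)"
proof -
  obtain h where h: "h \<longlonglongrightarrow> 0"
    and bound: "\<And>eps. 0 < eps \<Longrightarrow> eps < calpha \<Longrightarrow> deficit eps \<le> h (L eps)"
    using deficit_le_null_sequence by blast
  have small: "eventually (\<lambda>eps. 0 < eps \<and> eps < calpha) (at_right (0::real))"
    using calpha_pos by (simp add: eventually_at_right_field) metis
  show ?thesis
  proof (rule tendsto_sandwich[OF _ _ tendsto_const])
    show "eventually (\<lambda>eps. 0 \<le> deficit eps) (at_right 0)"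
      using small by eventually_elim (simp add: deficit_nonneg)
    show "eventually (\<lambda>eps. deficit eps \<le> h (L eps)) (at_right 0)"
      using small by eventually_elim (simp add: bound)
    show "((\<lambda>eps. h (L eps)) \<longlongrightarrow> 0) (at_right 0)"
      by (rule filterlim_compose[OF h Leps_tendsto_sequentially[OF calpha_pos alpha_pos]])
  qed
qed

end

theorem lemma1:
  fixes P :: "'a measure" and Q :: "'b measure"
    and X :: "'a \<Rightarrow> real" and Xl :: "nat \<Rightarrow> 'a \<Rightarrow> real"
    and Cl :: "nat \<Rightarrow> real"
    and Y :: "nat \<Rightarrow> nat \<Rightarrow> 'b \<Rightarrow> real"
    and alpha beta gamma calpha C c C' :: real
  assumes P: "prob_space P" and Q: "prob_space Q"
    and X_L2: "X \<in> borel_measurable P" "integrable P (\<lambda>\<omega>. (X \<omega>)\<^sup>2)"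
    and Xl_L2: "\<And>l. Xl l \<in> borel_measurable P" "\<And>l. integrable P (\<lambda>\<omega>. (Xl l \<omega>)\<^sup>2)"
    and Y_indep: "prob_space.indep_vars Q (\<lambda>_. borel) (\<lambda>(l, i). Y l i) UNIV"
    and Y_law: "\<And>l i. distr Q borel (Y l i) = distr P borel (dX Xl l)"
    (* Assumption A *)
    and pos: "alpha > 0" "beta > 0" "gamma > 0" "min beta gamma \<le> 2 * alpha" "calpha > 0"
    and bias: "\<And>l. \<bar>integral\<^sup>L P (\<lambda>\<omega>. X \<omega> - Xl l \<omega>)\<bar> \<le> calpha * exp (- alpha * real l)"
    and var: "C > 0" "\<And>l. Vlev P Xl l \<le> C * exp (- beta * real l)"
    and cost: "0 < c" "c < C'"
      "\<And>l. c * exp (gamma * real l) < Cl l" "\<And>l. Cl l < C' * exp (gamma * real l)"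
    (* Assumption B *)
    and B0: "Vlev P Xl 0 > 0"
    and B1: "beta = gamma \<Longrightarrow> filterlim (Ssum (Vlev P Xl) Cl) at_top sequentially"
    and B2: "gamma > beta \<Longrightarrow> beta < 2 * alpha \<and>
       (\<exists>u. beta \<le> u \<and> u < 2 * alpha \<and>
          liminf (\<lambda>k. ereal (Ssum (Vlev P Xl) Cl k * exp ((u - gamma) * real k / 2))) > 1)"
  shows "((\<lambda>eps. prob_space.variance Q (AML (Vlev P Xl) Cl calpha alpha Y eps) / eps\<^sup>2)
            \<longlongrightarrow> 1) (at_right 0)"
proof -
  interpret P: prob_space P by fact
  interpret Q: prob_space Q by fact
  interpret mlmc_rates "Vlev P Xl" Cl alpha beta gamma calpha C c C'
    using pos var cost B0 B1 B2 by unfold_locales (auto simp: Vlev_def P.variance_positive)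
  have dX_meas: "dX Xl l \<in> borel_measurable P" for l
    unfolding dX_def using Xl_L2(1) by auto
  have dX_sq: "integrable P (\<lambda>x. (dX Xl l x)\<^sup>2)" for l
    using square_integrable_diff[OF Xl_L2(1) Xl_L2(1) Xl_L2(2) Xl_L2(2), of l "l - 1"] Xl_L2(2)
    by (cases "l = 0") (simp_all add: dX_def)
  have Y_meas: "Y l i \<in> borel_measurable Q" for l i
    using Y_indep unfolding Q.indep_vars_def by (auto dest: bspec[of _ _ "(l, i)"])
  have "Q.variance (AML (Vlev P Xl) Cl calpha alpha Y eps) = (\<Sum>l\<le>L eps. Vlev P Xl l / M eps l)"
    for eps
    using integrable_square_if_same_distr[OF Y_meas dX_meas Y_law] dX_sq
      variance_if_same_distr[OF Y_meas dX_meas Y_law]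
    by (intro Q.variance_AML[OF Y_indep]) (simp_all add: Vlev_def)
  then have "Q.variance (AML (Vlev P Xl) Cl calpha alpha Y eps) / eps\<^sup>2 = 1 - deficit eps" for eps
    by (simp add: deficit_def)
  then show ?thesis
    using tendsto_diff[OF tendsto_const deficit_tendsto_0, of 1] by simp
qed

end
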